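(* Let $\phi:\{0,1\}^N\to\{0,1\}$ be a boolean function, regarded as a multi-valued logic gate with $k=N$, $T_i=\{0,1\}$, $w(i,0)=0$, $w(i,1)=1$ for all $i$, and output set $T=\{0,1\}\subset\mathbb{R}$ (so $N(\overline{\phi})=N$). Then $\mathrm{cs}(\overline{\phi})\le s(\phi)$.
   Context: Sensitivity: for $z\in\{0,1\}^N$, let $z^i$ be obtained from $z$ by changing its $i$-th coordinate; $s(\phi,z)$ is the number of indices $i$ with $\phi(z)\ne\phi(z^i)$, and $s(\phi)=\max_z s(\phi,z)$. Standard simplex: $\Delta^{m}=\{(t_0,\dots,t_m)\in\mathbb{R}^{m+1}: t_i\ge0,\ \sum_i t_i=1\}$; for $0\le j\le m$, $\Delta^m_j=\{(t_0,\dots,\widehat{t_j},\dots,t_m):(t_0,\dots,t_m)\in\Delta^m,\ t_j\neq0\}\subseteq\mathbb{R}^m$. Multi-valued logic gate: finite sets $T_i=\{w(i,0),\dots,w(i,n_i-1)\}$ ($i=1,\dots,k$), a finite set $T\subset\mathbb{R}^m$ and $\phi:T_1\times\cdots\times T_k\to T$. Fourier series expansion: $\overline{\phi}:\Delta^{n_1-1}\times\cdots\times\Delta^{n_k-1}\to\mathbb{R}^m$, $\overline{\phi}((t_{1,j})_j,\dots,(t_{k,j})_j)=\sum_{(j_1,\dots,j_k)}\big(\prod_{s=1}^k t_{s,j_s}\big)\phi(w(1,j_1),\dots,w(k,j_k))$. $N(\overline{\phi})=n_1+\cdots+n_k-k$. For $z=(w(1,j(z,1)),\dots,w(k,j(z,k)))$: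 $C(\overline{\phi},z)=\prod_{i=1}^k\Delta^{n_i-1}_{j(z,i)}\subseteq\mathbb{R}^{N(\overline\phi)}$, and $f_z:\mathbb{R}^{N(\overline\phi)}\to\mathbb{R}^m$ is the polynomial map in the variables $t_{i,j}$ ($j\ne j(z,i)$, ordered lexicographically) obtained from the multilinear formula for $\overline{\phi}$ by substituting $t_{i,j(z,i)}=1-\sum_{j\neq j(z,i)}t_{i,j}$. Signs: for $g:\mathbb{R}^n\to\mathbb{R}$ and nonempty $C$, $\mathrm{sign}_C(g)=+1,0,-1$ if $g>0$, $g=0$, $g<0$ on all of $C$ respectively, and $u$ (formal symbol) otherwise; $\mathrm{Sign}_C(g)=(\mathrm{sign}_C(\partial g/\partial x_1),\dots,\mathrm{sign}_C(\partial g/\partial x_n))$. $S_n$: nonzero tuples in $\{-1,0,1\}^n$ with first nonzero entry $1$. $t\in\{1,0,-1,u\}^n$ eliminates $s\in S_n$ if (i) $t_i\neq0\neq s_i$ for some $i$; (ii) there is $k\in\{\pm1\}$ with $t_i=ks_i$ whenever $s_i\ne0$, $t_i\ne0$; (iii) $s_i=0$ whenever $t_i=u$. $\mathrm{Elim}(X)$ = set of elements of $S_n$ eliminated by some element of $X$. $\mathrm{Sens}_C(f)$ = set of $v\in S_n$ eliminated by $\mathrm{Sign}_C(\pi\circ f)$ for some differentiable $\pi:\mathbb{R}^m\to\mathbb{R}$. Continuous sensitivity: with $N'=N(\overline\phi)$, $\mathrm{cs}(\overline{\phi},z)=\log_3\big(3^{N'}-2|\mathrm{Elim}(S_{N'}\setminus\mathrm{Sens}_{C(\overline{\phi},z)}(f_z))|\big)$,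 $\mathrm{cs}(\overline{\phi})=\max_z\mathrm{cs}(\overline{\phi},z)$. *)

theory Defs
  imports "HOL-Analysis.Analysis"
begin

definition flip_at :: "bool list \<Rightarrow> nat \<Rightarrow> bool list" where
  "flip_at z i = z[i := \<not> z ! i]"

definition sens_at :: "(bool list \<Rightarrow> bool) \<Rightarrow> nat \<Rightarrow> bool list \<Rightarrow> nat" where
  "sens_at \<phi> N z = card {i. i < N \<and> \<phi> z \<noteq> \<phi> (flip_at z i)}"

definition sens :: "(bool list \<Rightarrow> bool) \<Rightarrow> nat \<Rightarrow> nat" where
  "sens \<phi> N = Max (sens_at \<phi> N ` {z. length z = N})"

section \<open>Signs, elimination, Sens (vectors of R^n as nat \<Rightarrow> real, coordinates 0..<n)\<close>

datatype sgn4 = SPos | SZero | SNeg | SU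

definition sign_on :: "(nat \<Rightarrow> real) set \<Rightarrow> ((nat \<Rightarrow> real) \<Rightarrow> real) \<Rightarrow> sgn4" where
  "sign_on C g = (if \<forall>x\<in>C. g x > 0 then SPos
                  else if \<forall>x\<in>C. g x = 0 then SZero
                  else if \<forall>x\<in>C. g x < 0 then SNeg else SU)"

definition partial :: "((nat \<Rightarrow> real) \<Rightarrow> real) \<Rightarrow> nat \<Rightarrow> (nat \<Rightarrow> real) \<Rightarrow> real" where
  "partial g i x = deriv (\<lambda>s. g (x(i := s))) (x i)"

definition Sign_on :: "nat \<Rightarrow> (nat \<Rightarrow> real) set \<Rightarrow> ((nat \<Rightarrow> real) \<Rightarrow> real) \<Rightarrow> sgn4 list" where
  "Sign_on n C g = map (\<lambda>i. sign_on C (partial g i)) [0..<n]"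

definition S_set :: "nat \<Rightarrow> int list set" where
  "S_set n = {s. length s = n \<and> set s \<subseteq> {-1, 0, 1} \<and> (\<exists>i<n. s ! i \<noteq> 0)
                 \<and> s ! (LEAST i. s ! i \<noteq> 0) = 1}"

definition to_sgn4 :: "int \<Rightarrow> sgn4" where
  "to_sgn4 v = (if v > 0 then SPos else if v < 0 then SNeg else SZero)"

definition eliminates :: "sgn4 list \<Rightarrow> int list \<Rightarrow> bool" where
  "eliminates t s \<longleftrightarrow>
     (\<exists>i<length s. t ! i \<noteq> SZero \<and> s ! i \<noteq> 0) \<and>
     (\<exists>k\<in>{1, -1::int}. \<forall>i<length s. s ! i \<noteq> 0 \<and> t ! i \<noteq> SZero \<longrightarrow> t ! i = to_sgn4 (k * s ! i)) \<and>
     (\<forall>i<length s. t ! i = SU \<longrightarrow> s ! i = 0)"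

definition Elim :: "nat \<Rightarrow> sgn4 list set \<Rightarrow> int list set" where
  "Elim n X = {s \<in> S_set n. \<exists>t\<in>X. eliminates t s}"

text \<open>Sens for a map f : R^n \<rightarrow> R (here m = 1), \<pi> : R \<rightarrow> R differentiable\<close>
definition Sens :: "nat \<Rightarrow> (nat \<Rightarrow> real) set \<Rightarrow> ((nat \<Rightarrow> real) \<Rightarrow> real) \<Rightarrow> int list set" where
  "Sens n C f = {v \<in> S_set n. \<exists>\<pi> :: real \<Rightarrow> real. (\<forall>y. \<pi> differentiable (at y))
                    \<and> eliminates (Sign_on n C (\<pi> \<circ> f)) v}"

text \<open>elements of S_n are regarded as elements of {1,0,-1,u}^n via to_sgn4\<close>
definition cs_of :: "nat \<Rightarrow> (nat \<Rightarrow> real) set \<Rightarrow> ((nat \<Rightarrow> real) \<Rightarrow> real) \<Rightarrow> real" where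
  "cs_of n C f = log 3 (3 ^ n - 2 * real (card (Elim n (map to_sgn4 ` (S_set n - Sens n C f)))))"

text \<open>Fourier series expansion: t i j is the coordinate t_{i,j}, j \<in> {0,1}; w(i,0)=0=False, w(i,1)=1=True.\<close>
definition fourier_bool :: "(bool list \<Rightarrow> bool) \<Rightarrow> nat \<Rightarrow> (nat \<Rightarrow> nat \<Rightarrow> real) \<Rightarrow> real" where
  "fourier_bool \<phi> N t = (\<Sum>w\<in>{w. length w = N}. (\<Prod>i<N. t i (if w ! i then 1 else 0)) * of_bool (\<phi> w))"

definition jz :: "bool list \<Rightarrow> nat \<Rightarrow> nat" where
  "jz z i = (if z ! i then 1 else 0)"

text \<open>Delta^1_j as a subset of R (coordinate t_{1-j} of points of Delta^1 with t_j \<noteq> 0)\<close>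
definition Delta1_face :: "nat \<Rightarrow> real set" where
  "Delta1_face j = {t. \<exists>t0 t1. t0 \<ge> 0 \<and> t1 \<ge> 0 \<and> t0 + t1 = 1 \<and> [t0, t1] ! j \<noteq> 0 \<and> t = [t0, t1] ! (1 - j)}"

definition C_bool :: "nat \<Rightarrow> bool list \<Rightarrow> (nat \<Rightarrow> real) set" where
  "C_bool N z = {x. (\<forall>i<N. x i \<in> Delta1_face (jz z i)) \<and> (\<forall>i\<ge>N. x i = 0)}"

text \<open>f_z: variable x_i stands for t_{i,1-j(z,i)}; substitute t_{i,j(z,i)} = 1 - x_i.\<close>
definition f_bool :: "(bool list \<Rightarrow> bool) \<Rightarrow> nat \<Rightarrow> bool list \<Rightarrow> (nat \<Rightarrow> real) \<Rightarrow> real" where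
  "f_bool \<phi> N z x = fourier_bool \<phi> N (\<lambda>i j. if j = jz z i then 1 - x i else x i)"

definition cs_bool_at :: "(bool list \<Rightarrow> bool) \<Rightarrow> nat \<Rightarrow> bool list \<Rightarrow> real" where
  "cs_bool_at \<phi> N z = cs_of N (C_bool N z) (f_bool \<phi> N z)"

definition cs_bool :: "(bool list \<Rightarrow> bool) \<Rightarrow> nat \<Rightarrow> real" where
  "cs_bool \<phi> N = Max (cs_bool_at \<phi> N ` {z. length z = N})"

end

theory Submission
  imports Defs
begin

text \<open>
  At a point z the origin lies in the cell C(z), and along the i-th coordinate axis through the
  origin f_z interpolates affinely between \<phi>(z) and \<phi>(z^i). If \<phi> is insensitive to i at z,
  the i-th partial derivative of \<pi> \<circ> f_z therefore vanishes at the origin, so its sign on C(z)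
  is 0 or u. Hence no sign vector supported on insensitive coordinates lies in Sens, and every
  v \<in> S_N with a nonzero insensitive coordinate is eliminated by the projection of v onto the
  insensitive coordinates, up to sign. These v number (3^N - 3^s)/2 with s = s(\<phi>, z), so the
  argument of the logarithm in cs(\<phi>, z) is at most 3^s.
\<close>

lemma card_lists_nth_in:
  "card {xs. length xs = n \<and> (\<forall>i<n. xs ! i \<in> F i)} = (\<Prod>i<n. card (F i))"
proof (induction n arbitrary: F)
  case 0
  then show ?case by simp
next
  case (Suc n)
  have eq: "{xs. length xs = Suc n \<and> (\<forall>i<Suc n. xs ! i \<in> F i)} =
      (\<lambda>(x, xs). x # xs) ` (F 0 \<times> {xs. length xs = n \<and> (\<forall>i<n. xs ! i \<in> F (Suc i))})"
  proof (intro equalityI subsetI)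
    fix ys assume "ys \<in> {xs. length xs = Suc n \<and> (\<forall>i<Suc n. xs ! i \<in> F i)}"
    then obtain x xs where "ys = x # xs" "length xs = n" "\<forall>i<Suc n. (x # xs) ! i \<in> F i"
      by (auto simp: length_Suc_conv)
    then show "ys \<in> (\<lambda>(x, xs). x # xs) ` (F 0 \<times> {xs. length xs = n \<and> (\<forall>i<n. xs ! i \<in> F (Suc i))})"
      by force
  qed (auto simp: less_Suc_eq_0_disj)
  have "inj (\<lambda>(x::'a, xs). x # xs)" by (auto simp: inj_def)
  then show ?case
    unfolding eq
    by (simp add: card_image inj_on_subset card_cartesian_product Suc prod.lessThan_Suc_shift
             del: prod.lessThan_Suc)
qed

definition ternary_vectors :: "nat \<Rightarrow> int list set" where
  "ternary_vectors N = {v. length v = N \<and> (\<forall>i<N. v ! i \<in> {-1, 0, 1})}"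

definition supported_ternary_vectors :: "nat \<Rightarrow> nat set \<Rightarrow> int list set" where
  "supported_ternary_vectors N A = {v \<in> ternary_vectors N. \<forall>i<N. i \<notin> A \<longrightarrow> v ! i = 0}"

lemma card_supported_ternary_vectors:
  assumes "A \<subseteq> {..<N}"
  shows "card (supported_ternary_vectors N A) = 3 ^ card A"
proof -
  have "supported_ternary_vectors N A =
      {v. length v = N \<and> (\<forall>i<N. v ! i \<in> (if i \<in> A then {-1, 0, 1} else {0}))}"
    by (auto simp: supported_ternary_vectors_def ternary_vectors_def)
  also have "card \<dots> = (\<Prod>i<N. if i \<in> A then 3 else 1)"
    unfolding card_lists_nth_in by (rule prod.cong) auto
  also have "\<dots> = 3 ^ card A"
    using assms by (simp add: prod.If_cases Int_absorb1)
  finally show ?thesis .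
qed

lemma card_ternary_vectors: "card (ternary_vectors N) = 3 ^ N"
  using card_supported_ternary_vectors[of "{..<N}" N]
  by (simp add: supported_ternary_vectors_def)

lemma finite_ternary_vectors: "finite (ternary_vectors N)"
  using card_ternary_vectors[of N] by (intro card_ge_0_finite) simp

lemma S_set_subset_ternary_vectors: "S_set N \<subseteq> ternary_vectors N"
  by (auto simp: S_set_def ternary_vectors_def dest!: nth_mem)

lemma finite_S_set: "finite (S_set N)"
  using finite_subset[OF S_set_subset_ternary_vectors finite_ternary_vectors] .

text \<open>This also holds beyond the length of v, where both sides are the same unspecified value.\<close>
lemma nth_map_uminus_eq_0_iff: "map uminus v ! i = (0::int) \<longleftrightarrow> v ! i = 0"
  by (induction v arbitrary: i) (auto simp: nth_Cons split: nat.splits)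

lemma map_uminus_ternary_vectors:
  "v \<in> ternary_vectors N \<Longrightarrow> map uminus v \<in> ternary_vectors N"
  by (auto simp: ternary_vectors_def)

lemma S_set_or_uminus:
  assumes "v \<in> ternary_vectors N" and "\<exists>i<N. v ! i \<noteq> 0"
  shows "v \<in> S_set N \<or> map uminus v \<in> S_set N"
proof -
  let ?l = "LEAST i. v ! i \<noteq> 0"
  obtain j where j: "j < N" "v ! j \<noteq> 0" using assms(2) by blast
  have "v ! ?l \<noteq> 0" "?l < N"
    using LeastI[of "\<lambda>i. v ! i \<noteq> 0" j] Least_le[of "\<lambda>i. v ! i \<noteq> 0" j] j by auto
  moreover have "set v \<subseteq> {-1, 0, 1}" and "length v = N" and "v ! ?l \<in> {-1, 0, 1}"
    using assms(1) \<open>?l < N\<close> by (auto simp: ternary_vectors_def in_set_conv_nth)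
  ultimately show ?thesis
    using j by (auto simp: S_set_def nth_map_uminus_eq_0_iff)
qed

lemma map_uminus_S_set_notin:
  assumes "v \<in> S_set N"
  shows "map uminus v \<notin> S_set N"
proof
  let ?l = "LEAST i. v ! i \<noteq> 0"
  assume "map uminus v \<in> S_set N"
  then have "map uminus v ! ?l = 1"
    by (simp add: S_set_def nth_map_uminus_eq_0_iff)
  moreover obtain j where "j < N" "v ! j \<noteq> 0" "length v = N"
    using assms by (auto simp: S_set_def)
  then have "?l < length v"
    using Least_le[of "\<lambda>i. v ! i \<noteq> 0" j] by simp
  ultimately have "v ! ?l = -1" by simp
  with assms show False by (simp add: S_set_def)
qed

text \<open>
  Every nonzero ternary vector is in S_N up to sign, exactly once; hence S_N halves any
  sign-symmetric set of ternary vectors avoiding the zero vector.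
\<close>
lemma card_ternary_vectors_Diff_symmetric:
  assumes "W \<subseteq> ternary_vectors N" and "\<And>w. w \<in> W \<Longrightarrow> map uminus w \<in> W"
    and "replicate N 0 \<in> W"
  shows "card (ternary_vectors N - W) = 2 * card (S_set N - W)"
proof -
  have neg_W: "map uminus v \<in> W \<longleftrightarrow> v \<in> W" for v
    using assms(2)[of "map uminus v"] assms(2)[of v] by auto
  have "ternary_vectors N - W = (S_set N - W) \<union> map uminus ` (S_set N - W)"
  proof (intro equalityI subsetI)
    fix v assume v: "v \<in> ternary_vectors N - W"
    have "v \<noteq> replicate N 0" using v assms(3) by blast
    then have "\<exists>i<N. v ! i \<noteq> 0"
      using v by (auto simp: ternary_vectors_def intro: nth_equalityI)
    then have "v \<in> S_set N \<or> map uminus v \<in> S_set N"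
      using v S_set_or_uminus by blast
    then show "v \<in> (S_set N - W) \<union> map uminus ` (S_set N - W)"
      using v neg_W by (auto intro: image_eqI[where x = "map uminus v"])
  next
    fix v assume "v \<in> (S_set N - W) \<union> map uminus ` (S_set N - W)"
    then show "v \<in> ternary_vectors N - W"
      using S_set_subset_ternary_vectors map_uminus_ternary_vectors neg_W by blast
  qed
  moreover have "(S_set N - W) \<inter> map uminus ` (S_set N - W) = {}"
    using map_uminus_S_set_notin by fastforce
  moreover have "card (map uminus ` (S_set N - W)) = card (S_set N - W)"
    by (rule card_image) (simp add: inj_on_def)
  ultimately show ?thesis
    using finite_S_set by (simp add: card_Un_disjoint)
qed

lemma card_S_set: "2 * card (S_set N) = 3 ^ N - 1"
proof -
  have "S_set N - {replicate N 0} = S_set N" by (auto simp: S_set_def)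
  then show ?thesis
    using card_ternary_vectors_Diff_symmetric[of "{replicate N 0}" N] card_ternary_vectors[of N]
    by (simp add: ternary_vectors_def)
qed

lemma card_S_set_Diff_supported:
  assumes "A \<subseteq> {..<N}"
  shows "2 * card (S_set N - supported_ternary_vectors N A) = 3 ^ N - 3 ^ card A"
proof -
  let ?W = "supported_ternary_vectors N A"
  have W: "?W \<subseteq> ternary_vectors N" "\<And>w. w \<in> ?W \<Longrightarrow> map uminus w \<in> ?W" "replicate N 0 \<in> ?W"
    by (auto simp: supported_ternary_vectors_def ternary_vectors_def)
  show ?thesis
    using card_ternary_vectors_Diff_symmetric[OF W] card_Diff_subset[OF finite_subset[OF W(1)] W(1)]
      finite_ternary_vectors card_ternary_vectors card_supported_ternary_vectors[OF assms]
    by simp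
qed

lemma log_3_le_card_if_between:
  assumes "A \<subseteq> {..<N}" and "S_set N - supported_ternary_vectors N A \<subseteq> E" and "E \<subseteq> S_set N"
  shows "log 3 (3 ^ N - 2 * real (card E)) \<le> card A"
proof -
  have "card (S_set N - supported_ternary_vectors N A) \<le> card E" "card E \<le> card (S_set N)"
    using assms(2,3) finite_subset[OF _ finite_S_set] by (blast intro: card_mono)+
  moreover note card_S_set_Diff_supported[OF assms(1)] card_S_set[of N]
  moreover have "(3::nat) ^ card A \<le> 3 ^ N" "(1::nat) \<le> 3 ^ N"
    using assms(1) card_mono[of "{..<N}" A] by (auto intro: power_increasing)
  ultimately have "2 * card E + 1 \<le> 3 ^ N" "3 ^ N \<le> 3 ^ card A + 2 * card E"
    by linarith+
  then have "real (2 * card E + 1) \<le> real (3 ^ N)" "real (3 ^ N) \<le> real (3 ^ card A + 2 * card E)"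
    by (simp_all only: of_nat_le_iff)
  then have "1 \<le> 3 ^ N - 2 * real (card E)" "3 ^ N - 2 * real (card E) \<le> 3 ^ card A"
    by simp_all
  then have "log 3 (3 ^ N - 2 * real (card E)) \<le> log 3 (3 ^ card A)"
    by (subst log_le_cancel_iff) auto
  then show ?thesis by simp
qed

lemma finite_bool_lists_length: "finite {w :: bool list. length w = N}"
  using finite_lists_length_eq[of "UNIV :: bool set" N] by simp

lemma length_flip_at [simp]: "length (flip_at z i) = length z"
  by (simp add: flip_at_def)

lemma nth_flip_at: "i < length z \<Longrightarrow> flip_at z i ! j = (if j = i then \<not> z ! i else z ! j)"
  by (simp add: flip_at_def nth_list_update)

lemma agree_off_iff_eq_or_flip_at:
  assumes "length w = length z" and "i < length z"
  shows "(\<forall>j<length z. j \<noteq> i \<longrightarrow> w ! j = z ! j) \<longleftrightarrow> w = z \<or> w = flip_at z i"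
proof
  assume agree: "\<forall>j<length z. j \<noteq> i \<longrightarrow> w ! j = z ! j"
  show "w = z \<or> w = flip_at z i"
  proof (cases "w ! i = z ! i")
    case True
    then have "w = z" using agree assms by (intro nth_equalityI) auto
    then show ?thesis ..
  next
    case False
    then have "w = flip_at z i"
      using agree assms by (intro nth_equalityI) (auto simp: nth_flip_at)
    then show ?thesis ..
  qed
qed (use assms in \<open>auto simp: nth_flip_at\<close>)

lemma weight_along_axis:
  assumes "length z = N" and "i < N" and "length w = N"
  shows "(\<Prod>j<N. if (if w ! j then 1 else 0) = jz z j then 1 - ((\<lambda>_. 0)(i := s)) j
                    else ((\<lambda>_. 0::real)(i := s)) j)
         = (if w = z then 1 - s else if w = flip_at z i then s else 0)"
    (is "?weight = _")
proof -
  have flip_ne: "flip_at z i \<noteq> z" and flip_i: "flip_at z i ! i = (\<not> z ! i)"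
    using assms by (auto simp: nth_flip_at dest: arg_cong[where f = "\<lambda>v. v ! i"])
  have factor_off: "(if (if w ! j then 1 else 0) = jz z j then 1 - ((\<lambda>_. 0)(i := s)) j
                      else ((\<lambda>_. 0::real)(i := s)) j) = of_bool (w ! j = z ! j)"
    if "j \<noteq> i" for j
    using that by (auto simp: jz_def)
  have "?weight = (if w ! i = z ! i then 1 - s else s) *
      (\<Prod>j\<in>{..<N} - {i}. if (if w ! j then 1 else 0) = jz z j then 1 - ((\<lambda>_. 0)(i := s)) j
                              else ((\<lambda>_. 0::real)(i := s)) j)"
    using assms(2) by (simp add: prod.remove[of _ i] jz_def)
  also have "\<dots> = (if w ! i = z ! i then 1 - s else s) * (\<Prod>j\<in>{..<N} - {i}. of_bool (w ! j = z ! j))"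
    by (intro arg_cong[where f = "(*) _"] prod.cong) (auto simp: factor_off)
  also have "\<dots> = (if w ! i = z ! i then 1 - s else s) * of_bool (\<forall>j<N. j \<noteq> i \<longrightarrow> w ! j = z ! j)"
    by (auto simp: prod_zero_iff intro: prod.neutral)
  also have "\<dots> = (if w = z then 1 - s else if w = flip_at z i then s else 0)"
    using agree_off_iff_eq_or_flip_at[of w z i] assms flip_ne flip_i by auto
  finally show ?thesis .
qed

lemma f_bool_along_axis:
  assumes "length z = N" and "i < N"
  shows "f_bool \<phi> N z ((\<lambda>_. 0)(i := s)) = (1 - s) * of_bool (\<phi> z) + s * of_bool (\<phi> (flip_at z i))"
proof -
  have "flip_at z i \<noteq> z"
    using assms by (auto simp: nth_flip_at dest: arg_cong[where f = "\<lambda>v. v ! i"])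
  then have "f_bool \<phi> N z ((\<lambda>_. 0)(i := s)) =
      (\<Sum>w\<in>{w. length w = N}. (if w = z then (1 - s) * of_bool (\<phi> z) else 0)
                              + (if w = flip_at z i then s * of_bool (\<phi> (flip_at z i)) else 0))"
    unfolding f_bool_def fourier_bool_def
    by (intro sum.cong) (auto simp: weight_along_axis[OF assms])
  also have "\<dots> = (1 - s) * of_bool (\<phi> z) + s * of_bool (\<phi> (flip_at z i))"
    using assms(1) by (simp add: sum.distrib sum.delta[OF finite_bool_lists_length])
  finally show ?thesis .
qed

lemma origin_in_C_bool: "(\<lambda>_. 0) \<in> C_bool N z"
proof -
  have "(0::real) \<in> Delta1_face 0"
    unfolding Delta1_face_def mem_Collect_eq by (rule exI[of _ 1], rule exI[of _ 0]) simp
  moreover have "(0::real) \<in> Delta1_face 1"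
    unfolding Delta1_face_def mem_Collect_eq by (rule exI[of _ 0], rule exI[of _ 1]) simp
  ultimately show ?thesis by (simp add: C_bool_def jz_def)
qed

lemma sign_on_if_zero_at:
  fixes g :: "(nat \<Rightarrow> real) \<Rightarrow> real"
  assumes "x \<in> C" and "g x = 0"
  shows "sign_on C g \<in> {SZero, SU}"
proof -
  have "\<not> (\<forall>y\<in>C. g y > 0)" "\<not> (\<forall>y\<in>C. g y < 0)"
    using assms by (metis less_irrefl)+
  then show ?thesis by (auto simp: sign_on_def)
qed

text \<open>No differentiability of \<pi> is needed: \<pi> \<circ> f_z is constant along the axis.\<close>
lemma partial_f_bool_insensitive_at_origin:
  assumes "length z = N" and "i < N" and "\<phi> (flip_at z i) = \<phi> z"
  shows "partial (\<pi> \<circ> f_bool \<phi> N z) i (\<lambda>_. 0) = 0"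
proof -
  have "f_bool \<phi> N z ((\<lambda>_. 0)(i := s)) = of_bool (\<phi> z)" for s
    using f_bool_along_axis[OF assms(1,2), of \<phi> s] assms(3) by (simp add: left_diff_distrib)
  then show ?thesis by (simp add: partial_def)
qed

lemma notin_Sens_if_supported_insensitive:
  assumes "length z = N" and "length w = N"
    and "\<And>j. j < N \<Longrightarrow> w ! j \<noteq> 0 \<Longrightarrow> \<phi> (flip_at z j) = \<phi> z"
  shows "w \<notin> Sens N (C_bool N z) (f_bool \<phi> N z)"
proof
  assume "w \<in> Sens N (C_bool N z) (f_bool \<phi> N z)"
  then obtain \<pi> where elim: "eliminates (Sign_on N (C_bool N z) (\<pi> \<circ> f_bool \<phi> N z)) w"
    by (auto simp: Sens_def)
  let ?t = "Sign_on N (C_bool N z) (\<pi> \<circ> f_bool \<phi> N z)"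
  obtain j where j: "j < N" "?t ! j \<noteq> SZero" "w ! j \<noteq> 0"
    using elim assms(2) by (auto simp: eliminates_def)
  have "sign_on (C_bool N z) (partial (\<pi> \<circ> f_bool \<phi> N z) j) \<in> {SZero, SU}"
    by (rule sign_on_if_zero_at[OF origin_in_C_bool])
      (rule partial_f_bool_insensitive_at_origin[OF assms(1) j(1) assms(3)[OF j(1,3)]])
  then have "?t ! j \<in> {SZero, SU}"
    using j(1) by (simp add: Sign_on_def)
  with j have "?t ! j = SU" by simp
  with elim j assms(2) have "w ! j = 0" by (auto simp: eliminates_def)
  with j show False by simp
qed

lemma eliminates_map_to_sgn4:
  assumes "length w = length v" and "k \<in> {1, -1}"
    and "\<And>i. i < length v \<Longrightarrow> w ! i \<noteq> 0 \<Longrightarrow> w ! i = k * v ! i"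
    and "\<exists>i<length v. w ! i \<noteq> 0"
  shows "eliminates (map to_sgn4 w) v"
  unfolding eliminates_def
proof (intro conjI)
  show "\<exists>i<length v. map to_sgn4 w ! i \<noteq> SZero \<and> v ! i \<noteq> 0"
  proof -
    obtain i where "i < length v" "w ! i \<noteq> 0" using assms(4) by blast
    moreover from this have "w ! i = k * v ! i" by (rule assms(3))
    ultimately show ?thesis using assms(1)
      by (intro exI[of _ i]) (auto simp: to_sgn4_def)
  qed
  show "\<exists>k\<in>{1, -1}. \<forall>i<length v. v ! i \<noteq> 0 \<and> map to_sgn4 w ! i \<noteq> SZero \<longrightarrow>
          map to_sgn4 w ! i = to_sgn4 (k * v ! i)"
    using assms(1-3) by (intro bexI[of _ k]) (auto simp: to_sgn4_def split: if_splits)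
  show "\<forall>i<length v. map to_sgn4 w ! i = SU \<longrightarrow> v ! i = 0"
    using assms(1) by (simp add: to_sgn4_def)
qed

text \<open>
  The eliminating sign vector is the projection of v onto the coordinates insensitive at z,
  negated if necessary to lie in S_N.
\<close>
lemma S_set_in_Elim_if_insensitive_coordinate:
  assumes "length z = N" and "v \<in> S_set N"
    and "i < N" and "\<phi> (flip_at z i) = \<phi> z" and "v ! i \<noteq> 0"
  shows "v \<in> Elim N (map to_sgn4 ` (S_set N - Sens N (C_bool N z) (f_bool \<phi> N z)))"
proof -
  define u where "u = map (\<lambda>j. if \<phi> (flip_at z j) = \<phi> z then v ! j else 0) [0..<N]"
  have v: "v \<in> ternary_vectors N" "length v = N"
    using assms(2) S_set_subset_ternary_vectors by (auto simp: ternary_vectors_def)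
  have u: "length u = N" "\<And>j. j < N \<Longrightarrow> u ! j = (if \<phi> (flip_at z j) = \<phi> z then v ! j else 0)"
    by (simp_all add: u_def)
  have "u \<in> ternary_vectors N" "\<exists>j<N. u ! j \<noteq> 0"
    using v assms(3-5) by (auto simp: ternary_vectors_def u)
  then have "u \<in> S_set N \<or> map uminus u \<in> S_set N"
    by (rule S_set_or_uminus)
  then obtain w and k :: int
    where w: "w \<in> S_set N" "k \<in> {1, -1}" "length w = N"
      and w_nth: "\<And>j. j < N \<Longrightarrow> w ! j = k * u ! j"
  proof (elim disjE)
    assume "u \<in> S_set N"
    then show thesis using that[of u 1] u(1) by simp
  next
    assume "map uminus u \<in> S_set N"
    then show thesis using that[of "map uminus u" "-1"] u(1) by simp
  qed
  have "\<phi> (flip_at z j) = \<phi> z" if "j < N" "w ! j \<noteq> 0" for j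
  proof (rule ccontr)
    assume "\<phi> (flip_at z j) \<noteq> \<phi> z"
    then have "w ! j = 0" using that(1) by (simp add: w_nth u(2))
    with that(2) show False ..
  qed
  then have "w \<notin> Sens N (C_bool N z) (f_bool \<phi> N z)"
    using notin_Sens_if_supported_insensitive assms(1) w(3) by blast
  moreover have "eliminates (map to_sgn4 w) v"
  proof (rule eliminates_map_to_sgn4[OF _ w(2)])
    show "length w = length v" using w(3) v(2) by simp
    show "w ! j = k * v ! j" if "j < length v" "w ! j \<noteq> 0" for j
      using that v(2) by (auto simp: w_nth u(2))
    show "\<exists>j<length v. w ! j \<noteq> 0"
      using assms(3-5) v(2) w(2) by (intro exI[of _ i]) (auto simp: w_nth u(2))
  qed
  ultimately show ?thesis
    using assms(2) w(1) by (auto simp: Elim_def)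
qed

lemma cs_bool_at_le_sens_at:
  assumes "length z = N"
  shows "cs_bool_at \<phi> N z \<le> real (sens_at \<phi> N z)"
proof -
  define A where "A = {i. i < N \<and> \<phi> z \<noteq> \<phi> (flip_at z i)}"
  define E where "E = Elim N (map to_sgn4 ` (S_set N - Sens N (C_bool N z) (f_bool \<phi> N z)))"
  have "S_set N - supported_ternary_vectors N A \<subseteq> E"
  proof
    fix v assume v: "v \<in> S_set N - supported_ternary_vectors N A"
    then obtain i where "i < N" "i \<notin> A" "v ! i \<noteq> 0"
      using S_set_subset_ternary_vectors by (auto simp: supported_ternary_vectors_def)
    with v assms show "v \<in> E"
      unfolding E_def by (intro S_set_in_Elim_if_insensitive_coordinate) (auto simp: A_def)
  qed
  moreover have "E \<subseteq> S_set N" "A \<subseteq> {..<N}"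
    by (auto simp: E_def Elim_def A_def)
  ultimately have "log 3 (3 ^ N - 2 * real (card E)) \<le> card A"
    by (intro log_3_le_card_if_between)
  then show ?thesis
    by (simp add: cs_bool_at_def cs_of_def E_def sens_at_def A_def)
qed

theorem mainTheorem9:
  fixes \<phi> :: "bool list \<Rightarrow> bool" and N :: nat
  shows "cs_bool \<phi> N \<le> real (sens \<phi> N)"
proof -
  have nonempty: "\<exists>z :: bool list. length z = N" by (intro exI[of _ "replicate N False"]) simp
  have "cs_bool_at \<phi> N z \<le> real (sens \<phi> N)" if "length z = N" for z
  proof -
    have "sens_at \<phi> N z \<le> sens \<phi> N"
      unfolding sens_def using that finite_bool_lists_length by (intro Max_ge) auto
    with cs_bool_at_le_sens_at[OF that, of \<phi>] show ?thesis
      by (meson of_nat_le_iff order_trans)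
  qed
  then show ?thesis
    unfolding cs_bool_def using finite_bool_lists_length nonempty by (subst Max_le_iff) auto
qed

end
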